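(* Let $G=(V,E)$ be a finite, simple, connected graph with $|V|\geq 3$ and let $d\in\mathrm{Der}(\mathcal{A}(G))$ with $d(e_i)=\sum_{k\in V}d_{ik}e_k$. If $d_{k\ell}\neq 0$ for some $k,\ell\in V$ with $k\neq\ell$, then there is a twin class $\mathcal{T}\subset V$ with $|\mathcal{T}|\geq 3$ such that $k,\ell\in\mathcal{T}$.
   Context: Throughout, $\mathbb{K}$ is a field of characteristic $0$. A graph $G=(V,E)$ has vertex set $V=\{1,\dots,n\}$ and is assumed finite, simple (no loops, no multiple edges) and connected. $\mathcal{N}(i)$ denotes the set of neighbors of vertex $i$, and $(a_{ij})$ is the adjacency matrix ($a_{ij}=1$ if $i,j$ are adjacent, $0$ otherwise). The evolution algebra $\mathcal{A}(G)$ is the $\mathbb{K}$-algebra with basis $\{e_i: i\in V\}$ and product $e_i\cdot e_i=\sum_{k\in V}a_{ik}e_k=\sum_{k\in\mathcal{N}(i)}e_k$ and $e_i\cdot e_j=0$ for $i\neq j$. A derivation of $\mathcal{A}(G)$ is a linear map $d:\mathcal{A}(G)\to\mathcal{A}(G)$ with $d(u\cdot v)=d(u)\cdot v+u\cdot d(v)$ for all $u,v$; $\mathrm{Der}(\mathcal{A}(G))$ is the space of derivations, and for $d$ in it we write $d(e_i)=\sum_{k\in V}d_{ik}e_k$. Two vertices $i,j$ are twins if $\mathcal{N}(i)=\mathcal{N}(j)$; this is an equivalence relation whose classes are called twin classes. *)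

theory Defs
  imports Main "HOL-Library.Cardinality"
begin

text \<open>Elements of the
evolution algebra A(G) over the field 'k are coefficient vectors
u :: 'v \<Rightarrow> 'k with respect to the natural basis e_i (e_i = indicator of i).\<close>

definition simple_graph :: "('v \<Rightarrow> 'v \<Rightarrow> bool) \<Rightarrow> bool" where
  "simple_graph E \<longleftrightarrow> (\<forall>i j. E i j \<longrightarrow> E j i) \<and> (\<forall>i. \<not> E i i)"

definition connected_graph :: "('v \<Rightarrow> 'v \<Rightarrow> bool) \<Rightarrow> bool" where
  "connected_graph E \<longleftrightarrow> (\<forall>i j. E\<^sup>*\<^sup>* i j)"

definition nbhd :: "('v \<Rightarrow> 'v \<Rightarrow> bool) \<Rightarrow> 'v \<Rightarrow> 'v set" where
  "nbhd E i = {k. E i k}"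

definition adj :: "('v \<Rightarrow> 'v \<Rightarrow> bool) \<Rightarrow> 'v \<Rightarrow> 'v \<Rightarrow> 'k::field" where
  "adj E i k = (if E i k then 1 else 0)"

text \<open>Product of A(G): (\<Sum> u_i e_i)(\<Sum> w_j e_j) = \<Sum>_i u_i w_i e_i e_i = \<Sum>_i u_i w_i \<Sum>_k a_ik e_k.\<close>
definition evo_mult :: "('v::finite \<Rightarrow> 'v \<Rightarrow> bool) \<Rightarrow> ('v \<Rightarrow> 'k::field) \<Rightarrow> ('v \<Rightarrow> 'k) \<Rightarrow> ('v \<Rightarrow> 'k)" where
  "evo_mult E u w = (\<lambda>k. \<Sum>i\<in>UNIV. u i * w i * adj E i k)"

text \<open>The linear map with matrix D, i.e. d(e_i) = \<Sum>_k D i k e_k.\<close>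
definition lin_map :: "('v::finite \<Rightarrow> 'v \<Rightarrow> 'k::field) \<Rightarrow> ('v \<Rightarrow> 'k) \<Rightarrow> ('v \<Rightarrow> 'k)" where
  "lin_map D u = (\<lambda>k. \<Sum>i\<in>UNIV. u i * D i k)"

definition is_derivation :: "('v::finite \<Rightarrow> 'v \<Rightarrow> bool) \<Rightarrow> ('v \<Rightarrow> 'v \<Rightarrow> 'k::field) \<Rightarrow> bool" where
  "is_derivation E D \<longleftrightarrow>
     (\<forall>u w. lin_map D (evo_mult E u w) = (\<lambda>k. evo_mult E (lin_map D u) w k + evo_mult E u (lin_map D w) k))"

definition twin_class :: "('v \<Rightarrow> 'v \<Rightarrow> bool) \<Rightarrow> 'v set \<Rightarrow> bool" where
  "twin_class E T \<longleftrightarrow> (\<exists>i. T = {j. nbhd E j = nbhd E i})"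

end

theory Submission
  imports Defs
begin

text \<open>Evaluating the derivation rule on products of basis vectors gives two families of linear
  relations among the entries of \<open>D\<close>. From \<open>e\<^sub>ie\<^sub>j = 0\<close> one gets that a nonzero off-diagonal entry
  \<open>D i j\<close> forces \<open>i\<close> and \<open>j\<close> to be twins with \<open>D j i = - D i j\<close>; hence in the column sums
  coming from \<open>d(e\<^sub>m\<^sup>2)\<close> only twins of the column index contribute. If the twin class of \<open>k\<close>
  were just \<open>{k, l}\<close>, then for a common neighbour \<open>m\<close> of \<open>k\<close> and \<open>l\<close> these column sums give
  \<open>D k l + D l l = 2 D m m = D k k + D l k\<close>; together with \<open>D k k = D l l\<close> and
  \<open>D l k = - D k l\<close> this forces \<open>2 D k l = 0\<close>.\<close>

definition basis_vec :: "'v \<Rightarrow> 'v \<Rightarrow> 'k::field" where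
  "basis_vec i = (\<lambda>x. if x = i then 1 else 0)"

lemma basis_vec_apply [simp]: "basis_vec i j = (if j = i then 1 else 0)"
  by (simp add: basis_vec_def)

lemma evo_mult_basis_vec_left: "evo_mult E (basis_vec i) w = (\<lambda>q. w i * adj E i q)"
  unfolding evo_mult_def basis_vec_def by (simp add: if_distrib[of "\<lambda>c. c * _"] cong: if_cong)

lemma evo_mult_basis_vec_right: "evo_mult E w (basis_vec i) = (\<lambda>q. w i * adj E i q)"
  unfolding evo_mult_def basis_vec_def by (simp add: if_distrib[of "\<lambda>c. _ * c * _"] cong: if_cong)

lemma lin_map_basis_vec: "lin_map D (basis_vec i) = D i"
  unfolding lin_map_def basis_vec_def by (simp add: if_distrib[of "\<lambda>c. c * _"] cong: if_cong)

lemma lin_map_zero: "lin_map D (\<lambda>q. 0) = (\<lambda>q. 0)"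
  unfolding lin_map_def by simp

lemma derivation_basis_product:
  assumes "is_derivation E D" "i \<noteq> j"
  shows "D i j * adj E j q + D j i * adj E i q = 0"
proof -
  have "evo_mult E (basis_vec i) (basis_vec j) = (\<lambda>q. 0)"
    using assms(2) by (simp add: evo_mult_basis_vec_left)
  with assms(1)[unfolded is_derivation_def, rule_format, of "basis_vec i" "basis_vec j"]
  show ?thesis using assms(2)
    by (simp add: lin_map_zero lin_map_basis_vec evo_mult_basis_vec_left
        evo_mult_basis_vec_right fun_eq_iff)
qed

lemma derivation_basis_square:
  assumes "is_derivation E D"
  shows "(\<Sum>p\<in>UNIV. adj E i p * D p q) = 2 * D i i * adj E i q"
proof -
  have "evo_mult E (basis_vec i) (basis_vec i) = adj E i"
    by (simp add: evo_mult_basis_vec_left)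
  with assms[unfolded is_derivation_def, rule_format, of "basis_vec i" "basis_vec i"]
  have "lin_map D (adj E i) = (\<lambda>q. 2 * D i i * adj E i q)"
    by (simp add: lin_map_basis_vec evo_mult_basis_vec_left evo_mult_basis_vec_right mult.assoc)
  then show ?thesis by (simp add: lin_map_def fun_eq_iff)
qed

lemma connected_graph_ex_neighbour:
  assumes "connected_graph E" "i \<noteq> j"
  obtains m where "E i m"
proof -
  have "E\<^sup>*\<^sup>* i j" using assms(1) unfolding connected_graph_def by blast
  then show ?thesis using assms(2) that by (cases rule: converse_rtranclpE) auto
qed

lemma derivation_offdiag_twins:
  assumes "connected_graph E" "is_derivation E D" "i \<noteq> j" "D i j \<noteq> 0"
  shows "nbhd E i = nbhd E j" and "D j i = - D i j"
proof -
  obtain q where "E j q" using connected_graph_ex_neighbour[OF assms(1)] assms(3) by metis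
  note rel = derivation_basis_product[OF assms(2,3)]
  from rel[of q] \<open>E j q\<close> assms(4) have "D j i \<noteq> 0" and "E i q"
    by (auto simp: adj_def split: if_splits)
  have "E i r \<longleftrightarrow> E j r" for r
    using rel[of r] assms(4) \<open>D j i \<noteq> 0\<close> by (auto simp: adj_def split: if_splits)
  then show "nbhd E i = nbhd E j" by (simp add: nbhd_def)
  from rel[of q] \<open>E j q\<close> \<open>E i q\<close> show "D j i = - D i j"
    by (simp add: adj_def add_eq_0_iff)
qed

lemma derivation_column_sum_twins:
  assumes "connected_graph E" "is_derivation E D"
  shows "(\<Sum>p\<in>UNIV. c p * D p q) = (\<Sum>p\<in>{p. nbhd E p = nbhd E q}. c p * D p q)"
proof (rule sum.mono_neutral_right)
  show "\<forall>p\<in>UNIV - {p. nbhd E p = nbhd E q}. c p * D p q = 0"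
  proof
    fix p assume "p \<in> UNIV - {p. nbhd E p = nbhd E q}"
    then have "D p q = 0" using derivation_offdiag_twins(1)[OF assms, of p q] by auto
    then show "c p * D p q = 0" by simp
  qed
qed auto

lemma derivation_twins_diag_eq:
  fixes D :: "'v::finite \<Rightarrow> 'v \<Rightarrow> 'k::field_char_0"
  assumes "is_derivation E D" "nbhd E k = nbhd E l" "E k m"
  shows "D k k = D l l"
proof -
  have "adj E k = adj E l"
    using assms(2) unfolding nbhd_def adj_def by (metis mem_Collect_eq)
  then have "2 * D k k * adj E k m = 2 * D l l * adj E l m"
    using derivation_basis_square[OF assms(1), of k m] derivation_basis_square[OF assms(1), of l m]
    by metis
  moreover have "E l m" using assms(2,3) unfolding nbhd_def by blast
  ultimately show ?thesis using assms(3) by (simp add: adj_def)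
qed

lemma derivation_offdiag_zero_if_twin_pair:
  fixes D :: "'v::finite \<Rightarrow> 'v \<Rightarrow> 'k::field_char_0"
  assumes "simple_graph E" "connected_graph E" "is_derivation E D" "k \<noteq> l"
    and pair: "{p. nbhd E p = nbhd E k} = {k, l}"
  shows "D k l = 0"
proof (rule ccontr)
  assume "D k l \<noteq> 0"
  with assms(2-4) have twins: "nbhd E k = nbhd E l" and skew: "D l k = - D k l"
    by (rule derivation_offdiag_twins)+
  obtain m where "E k m" using connected_graph_ex_neighbour[OF assms(2,4)] by metis
  with twins assms(1) have "E m k" "E m l"
    unfolding simple_graph_def nbhd_def by blast+
  have column: "D k q + D l q = 2 * D m m" if "q \<in> {k, l}" for q
  proof -
    have "{p. nbhd E p = nbhd E q} = {k, l}" using pair twins that by auto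
    then have "(\<Sum>p\<in>UNIV. adj E m p * D p q) = D k q + D l q"
      using derivation_column_sum_twins[OF assms(2,3)] \<open>E m k\<close> \<open>E m l\<close> assms(4)
      by (simp add: adj_def)
    moreover have "E m q" using that \<open>E m k\<close> \<open>E m l\<close> by auto
    ultimately show ?thesis using derivation_basis_square[OF assms(3), of m q] by (simp add: adj_def)
  qed
  have "D k k = D l l" using derivation_twins_diag_eq[OF assms(3) twins \<open>E k m\<close>] .
  with column[of k] column[of l] skew have "2 * D k l = 0" by (simp add: algebra_simps)
  with \<open>D k l \<noteq> 0\<close> show False by simp
qed

theorem lemma3p5:
  fixes E :: "'v::finite \<Rightarrow> 'v \<Rightarrow> bool"
    and D :: "'v \<Rightarrow> 'v \<Rightarrow> 'k::field_char_0"
  assumes "simple_graph E"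
    and "connected_graph E"
    and "CARD('v) \<ge> 3"
    and "is_derivation E D"
    and "k \<noteq> l" and "D k l \<noteq> 0"
  shows "\<exists>T. twin_class E T \<and> card T \<ge> 3 \<and> k \<in> T \<and> l \<in> T"
proof -
  define T where "T = {p. nbhd E p = nbhd E k}"
  have "twin_class E T" unfolding T_def twin_class_def by blast
  moreover have "k \<in> T" "l \<in> T"
    using derivation_offdiag_twins(1)[OF assms(2,4-6)] by (auto simp: T_def)
  moreover have "card T \<ge> 3"
  proof (rule ccontr)
    assume "\<not> card T \<ge> 3"
    with assms(5) have "card T \<le> card {k, l}" by simp
    moreover have "{k, l} \<subseteq> T" using \<open>k \<in> T\<close> \<open>l \<in> T\<close> by simp
    ultimately have "T = {k, l}" using card_seteq[of T "{k, l}"] by simp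
    then have "D k l = 0"
      using derivation_offdiag_zero_if_twin_pair[OF assms(1,2,4,5)] by (simp add: T_def)
    with assms(6) show False ..
  qed
  ultimately show ?thesis by blast
qed

end
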